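(* Let $X$ take values in $\{1,\dots,K\}$ with $p_x=P(X=x)>0$ for each $x$. Assume consistency $Y=Y_X$, conditional ignorability $(Y_1,\dots,Y_K)\perp X\mid \boldsymbol Z$, and positivity $0<P(X=x\mid \boldsymbol Z=\boldsymbol z)<1$ for all $x$ and all $\boldsymbol z$. Then $$\mathcal{MI}_X=\sum_{x=1}^{K}\sum_{x^*\neq x}p_x\,p_{x^*}\;\mathbb E_{\boldsymbol Z\mid X=x}\Big(\big[\mathbb E(Y_x\mid \boldsymbol Z)-\mathbb E(Y_{x^*}\mid \boldsymbol Z)\big]^2\Big),$$ where $\mathbb E_{\boldsymbol Z\mid X=x}$ denotes expectation over $\boldsymbol Z$ drawn from its conditional distribution given $X=x$.
   Context: Let $O=(Y,X,\boldsymbol Z)$ be a random vector with real outcome $Y$, $\mathbb E[Y^2]<\infty$, predictor/treatment $X$ and covariate vector $\boldsymbol Z$. Let $f_0(x,\boldsymbol z)=\mathbb E(Y\mid X=x,\boldsymbol Z=\boldsymbol z)$ be the true conditional expectation function. Let $O^{(a)}=(Y^{(a)},X^{(a)},\boldsymbol Z^{(a)})$ and $O^{(b)}=(Y^{(b)},X^{(b)},\boldsymbol Z^{(b)})$ be independent copies of $O$. Define $e_{\mathrm{orig}}=\mathbb E\big[(Y^{(a)}-f_0(X^{(a)},\boldsymbol Z^{(a)}))^2\big]$ and $e_{\mathrm{switch}}=\mathbb E\big[(Y^{(a)}-f_0(X^{(b)},\boldsymbol Z^{(a)}))^2\big]$ (all expectations assumed finite), and the Marginal Variable Importance Metric (MVIM)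 $\mathcal{MI}_X=e_{\mathrm{switch}}-e_{\mathrm{orig}}$. For each treatment level $x$, $Y_x$ denotes the potential outcome under $X=x$. *)

theory Defs
  imports "HOL-Probability.Probability"
begin

definition gen_alg :: "'a measure \<Rightarrow> ('a \<Rightarrow> 'd) \<Rightarrow> 'd measure \<Rightarrow> 'a measure" where
  "gen_alg M W MW = vimage_algebra (space M) W MW"

definition cond_indep ::
  "'a measure \<Rightarrow> ('a \<Rightarrow> 'b) \<Rightarrow> 'b measure \<Rightarrow> ('a \<Rightarrow> 'c) \<Rightarrow> 'c measure
     \<Rightarrow> ('a \<Rightarrow> 'd) \<Rightarrow> 'd measure \<Rightarrow> bool" where
  "cond_indep M U MU V MV W MW \<longleftrightarrow>
     (\<forall>A\<in>sets MU. \<forall>B\<in>sets MV. AE \<omega> in M.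
        real_cond_exp M (gen_alg M W MW)
          (indicator ({\<omega>\<in>space M. U \<omega> \<in> A} \<inter> {\<omega>\<in>space M. V \<omega> \<in> B})) \<omega>
        = real_cond_exp M (gen_alg M W MW) (indicator {\<omega>\<in>space M. U \<omega> \<in> A}) \<omega>
          * real_cond_exp M (gen_alg M W MW) (indicator {\<omega>\<in>space M. V \<omega> \<in> B}) \<omega>)"

end

theory Submission
  imports Defs
begin

text \<open>Under ignorability and positivity the regression \<open>f0 x\<close>, evaluated at \<open>Z\<close>, coincides
  with \<open>\<mu>\<^sub>x = E(Y\<^sub>x | Z)\<close> for every treatment level \<open>x\<close>.  Since \<open>f0(X, Z) = E(Y | X, Z)\<close> is an
  orthogonal projection and \<open>f0 x' (Z)\<close> is \<open>(X, Z)\<close>-measurable, Pythagoras gives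
  \<open>E(Y - f0 x' Z)\<^sup>2 = e\<^sub>o\<^sub>r\<^sub>i\<^sub>g + E(f0(X, Z) - f0 x' Z)\<^sup>2\<close> for each fixed level \<open>x'\<close>.  Drawing \<open>x'\<close> as the
  treatment of an independent copy averages the left side into \<open>e\<^sub>s\<^sub>w\<^sub>i\<^sub>t\<^sub>c\<^sub>h\<close>, and splitting the
  right-hand term over the events \<open>X = x\<close> produces \<open>p\<^sub>x E\<^sub>Z\<^sub>|\<^sub>X\<^sub>=\<^sub>x(\<mu>\<^sub>x - \<mu>\<^sub>x\<^sub>')\<^sup>2\<close>; the diagonal terms vanish.\<close>

lemma subalgebra_gen_alg:
  assumes "W \<in> measurable M MW"
  shows "subalgebra M (gen_alg M W MW)"
  using assms unfolding subalgebra_def gen_alg_def measurable_iff_sets by simp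

lemma sigma_finite_subalgebra_gen_alg:
  assumes "finite_measure M" "W \<in> measurable M MW"
  shows "sigma_finite_subalgebra M (gen_alg M W MW)"
  by (rule finite_measure_subalgebra_is_sigma_finite)
     (simp add: finite_measure_subalgebra_def finite_measure_subalgebra_axioms_def
        subalgebra_gen_alg assms)

lemma measurable_gen_alg:
  assumes "W \<in> measurable M MW" "h \<in> measurable MW MV"
  shows "(\<lambda>\<omega>. h (W \<omega>)) \<in> measurable (gen_alg M W MW) MV"
  unfolding gen_alg_def
  by (rule measurable_compose[OF measurable_vimage_algebra1 assms(2)])
     (use assms(1) in \<open>auto simp: measurable_def\<close>)

lemma subalgebra_gen_alg_comp:
  assumes W: "W \<in> measurable M MW" and \<phi>: "\<phi> \<in> measurable MW MV"
    and V: "\<And>\<omega>. \<omega> \<in> space M \<Longrightarrow> V \<omega> = \<phi> (W \<omega>)"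
  shows "subalgebra (gen_alg M W MW) (gen_alg M V MV)"
proof -
  have "V \<in> measurable (gen_alg M W MW) MV"
    using measurable_gen_alg[OF W \<phi>]
    by (rule measurable_cong[THEN iffD1, rotated]) (simp add: V gen_alg_def)
  then show ?thesis
    unfolding subalgebra_def measurable_iff_sets by (simp add: gen_alg_def)
qed

lemma integrable_mult_bounded:
  fixes c f :: "'a \<Rightarrow> real"
  assumes "integrable M f" "c \<in> borel_measurable M" "AE \<omega> in M. \<bar>c \<omega>\<bar> \<le> B"
  shows "integrable M (\<lambda>\<omega>. c \<omega> * f \<omega>)"
proof (rule Bochner_Integration.integrable_bound[of _ "\<lambda>\<omega>. B * f \<omega>"])
  show "integrable M (\<lambda>\<omega>. B * f \<omega>)" using assms(1) by simp
  show "(\<lambda>\<omega>. c \<omega> * f \<omega>) \<in> borel_measurable M"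
    using assms(1,2) by (simp add: borel_measurable_integrable)
  show "AE \<omega> in M. norm (c \<omega> * f \<omega>) \<le> norm (B * f \<omega>)"
    using assms(3)
  proof eventually_elim
    case (elim \<omega>)
    have "\<bar>c \<omega>\<bar> * \<bar>f \<omega>\<bar> \<le> \<bar>B\<bar> * \<bar>f \<omega>\<bar>"
      using elim by (intro mult_right_mono) auto
    then show ?case by (simp add: abs_mult)
  qed
qed

lemma integrable_mult_square_integrable:
  fixes f g :: "'a \<Rightarrow> real"
  assumes "f \<in> borel_measurable M" "g \<in> borel_measurable M"
    "integrable M (\<lambda>\<omega>. (f \<omega>)\<^sup>2)" "integrable M (\<lambda>\<omega>. (g \<omega>)\<^sup>2)"
  shows "integrable M (\<lambda>\<omega>. f \<omega> * g \<omega>)"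
proof (rule Bochner_Integration.integrable_bound[of _ "\<lambda>\<omega>. (f \<omega>)\<^sup>2 + (g \<omega>)\<^sup>2"])
  show "integrable M (\<lambda>\<omega>. (f \<omega>)\<^sup>2 + (g \<omega>)\<^sup>2)" using assms by auto
  show "(\<lambda>\<omega>. f \<omega> * g \<omega>) \<in> borel_measurable M" using assms by auto
  have "\<bar>a * b\<bar> \<le> a\<^sup>2 + b\<^sup>2" for a b :: real
  proof -
    have "2 * (\<bar>a\<bar> * \<bar>b\<bar>) \<le> a\<^sup>2 + b\<^sup>2"
      using sum_squares_bound[of "\<bar>a\<bar>" "\<bar>b\<bar>"] by (simp add: mult.assoc)
    then show ?thesis using abs_ge_zero[of "a * b"] unfolding abs_mult by linarith
  qed
  then show "AE \<omega> in M. norm (f \<omega> * g \<omega>) \<le> norm ((f \<omega>)\<^sup>2 + (g \<omega>)\<^sup>2)"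
    by simp
qed

lemma integrable_square_diff:
  fixes f g :: "'a \<Rightarrow> real"
  assumes "f \<in> borel_measurable M" "g \<in> borel_measurable M"
    "integrable M (\<lambda>\<omega>. (f \<omega>)\<^sup>2)" "integrable M (\<lambda>\<omega>. (g \<omega>)\<^sup>2)"
  shows "integrable M (\<lambda>\<omega>. (f \<omega> - g \<omega>)\<^sup>2)"
proof -
  have "integrable M (\<lambda>\<omega>. (f \<omega>)\<^sup>2 - 2 * (f \<omega> * g \<omega>) + (g \<omega>)\<^sup>2)"
    using integrable_mult_square_integrable[OF assms] assms(3,4) by auto
  moreover have "(\<lambda>\<omega>. (f \<omega> - g \<omega>)\<^sup>2) = (\<lambda>\<omega>. (f \<omega>)\<^sup>2 - 2 * (f \<omega> * g \<omega>) + (g \<omega>)\<^sup>2)"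
    by (simp add: fun_eq_iff power2_diff algebra_simps)
  ultimately show ?thesis by simp
qed

lemma integral_mult_eq_0_if_indicator_integrals_eq_0:
  fixes w V :: "'a \<Rightarrow> real"
  assumes "finite_measure M" and V[measurable]: "V \<in> borel_measurable M"
    and "integrable M w" and wV: "integrable M (\<lambda>\<omega>. w \<omega> * V \<omega>)"
    and zero: "\<And>B. B \<in> sets borel \<Longrightarrow> (\<integral>\<omega>. w \<omega> * indicator B (V \<omega>) \<partial>M) = 0"
  shows "(\<integral>\<omega>. w \<omega> * V \<omega> \<partial>M) = 0"
proof -
  interpret VA: sigma_finite_subalgebra M "gen_alg M V borel"
    by (rule sigma_finite_subalgebra_gen_alg) fact+
  \<comment> \<open>The hypothesis says exactly that \<open>E(w | V) = 0\<close>.\<close>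
  have cond_zero: "AE \<omega> in M. real_cond_exp M (gen_alg M V borel) w \<omega> = 0"
  proof (rule VA.real_cond_exp_charact)
    fix S assume "S \<in> sets (gen_alg M V borel)"
    then obtain B where B: "B \<in> sets borel" and S: "S = V -` B \<inter> space M"
      by (auto simp: gen_alg_def sets_vimage_algebra2)
    have "(\<integral>\<omega>\<in>S. w \<omega> \<partial>M) = (\<integral>\<omega>. w \<omega> * indicator B (V \<omega>) \<partial>M)"
      unfolding S set_lebesgue_integral_def
      by (intro Bochner_Integration.integral_cong) (auto simp: indicator_def)
    then show "(\<integral>\<omega>\<in>S. w \<omega> \<partial>M) = (\<integral>\<omega>\<in>S. 0 \<partial>M)"
      using zero[OF B] by simp
  qed (use assms in auto)
  have "V \<in> borel_measurable (gen_alg M V borel)"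
    using measurable_gen_alg[OF V measurable_ident] by simp
  then have "(\<integral>\<omega>. w \<omega> * V \<omega> \<partial>M) = (\<integral>\<omega>. V \<omega> * real_cond_exp M (gen_alg M V borel) w \<omega> \<partial>M)"
    using VA.real_cond_exp_intg(2) wV assms(3) by (simp add: mult.commute borel_measurable_integrable)
  also have "\<dots> = (\<integral>\<omega>. 0 \<partial>M)"
    using cond_zero by (intro integral_cong_AE) (auto elim!: eventually_mono)
  finally show ?thesis by simp
qed

lemma real_cond_exp_indicator_abs_le_1:
  assumes "sigma_finite_subalgebra M F" "finite_measure M" and [measurable]: "A \<in> sets M"
  shows "AE \<omega> in M. \<bar>real_cond_exp M F (indicator A) \<omega>\<bar> \<le> 1"
proof -
  interpret sigma_finite_subalgebra M F by fact
  interpret finite_measure M by fact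
  have "AE \<omega> in M. 0 \<le> real_cond_exp M F (indicator A) \<omega>"
    by (rule real_cond_exp_pos) auto
  moreover have "AE \<omega> in M. real_cond_exp M F (indicator A) \<omega> \<le> real_cond_exp M F (\<lambda>_. 1) \<omega>"
    by (rule real_cond_exp_mono) (auto simp: indicator_def intro!: integrable_const_bound[of _ 1])
  moreover have "AE \<omega> in M. real_cond_exp M F (\<lambda>_. 1::real) \<omega> = 1"
    by (rule real_cond_exp_F_meas) auto
  ultimately show ?thesis
    by eventually_elim auto
qed

lemma integral_mult_real_cond_exp_bounded:
  fixes f g :: "'a \<Rightarrow> real"
  assumes "sigma_finite_subalgebra M F"
    and "f \<in> borel_measurable F" "AE \<omega> in M. \<bar>f \<omega>\<bar> \<le> 1" "integrable M g"
  shows "(\<integral>\<omega>. f \<omega> * real_cond_exp M F g \<omega> \<partial>M) = (\<integral>\<omega>. f \<omega> * g \<omega> \<partial>M)"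
proof -
  interpret sigma_finite_subalgebra M F by fact
  show ?thesis
    using assms measurable_from_subalg[OF subalg assms(2)]
    by (intro real_cond_exp_intg(2) integrable_mult_bounded) (auto simp: borel_measurable_integrable)
qed

lemma integral_indicator_mult_if_cond_indep:
  fixes V :: "'a \<Rightarrow> real"
  assumes F: "sigma_finite_subalgebra M F" and "finite_measure M"
    and S: "S \<in> sets F" and A[measurable]: "A \<in> sets M"
    and [measurable]: "V \<in> borel_measurable M" "B \<in> sets borel"
    and indep: "AE \<omega> in M.
       real_cond_exp M F (indicator ({\<omega>\<in>space M. V \<omega> \<in> B} \<inter> A)) \<omega>
       = real_cond_exp M F (indicator {\<omega>\<in>space M. V \<omega> \<in> B}) \<omega> * real_cond_exp M F (indicator A) \<omega>"
  shows "(\<integral>\<omega>. indicator S \<omega> * indicator A \<omega> * indicator B (V \<omega>) \<partial>M)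
    = (\<integral>\<omega>. indicator S \<omega> * real_cond_exp M F (indicator A) \<omega> * indicator B (V \<omega>) \<partial>M)"
proof -
  interpret sigma_finite_subalgebra M F by fact
  interpret finite_measure M by fact
  let ?\<pi> = "real_cond_exp M F (indicator A)"
  define E where "E = {\<omega>\<in>space M. V \<omega> \<in> B}"
  have [measurable]: "S \<in> sets M" "E \<in> sets M"
    using S subalg unfolding E_def by (auto simp: subalgebra_def)
  have indicator_integrable: "integrable M (indicator C :: 'a \<Rightarrow> real)" if "C \<in> sets M" for C
    using that by (intro integrable_const_bound[of _ 1]) (auto simp: indicator_def)
  have S\<pi>_bounded: "AE \<omega> in M. \<bar>indicator S \<omega> * ?\<pi> \<omega>\<bar> \<le> 1"
    using real_cond_exp_indicator_abs_le_1[OF F \<open>finite_measure M\<close> A]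
    by eventually_elim (auto simp: indicator_def)
  have "(\<integral>\<omega>. indicator S \<omega> * indicator A \<omega> * indicator B (V \<omega>) \<partial>M)
      = (\<integral>\<omega>. indicator S \<omega> * indicator (E \<inter> A) \<omega> \<partial>M :: real)"
    by (intro Bochner_Integration.integral_cong) (auto simp: E_def indicator_def)
  also have "\<dots> = (\<integral>\<omega>. indicator S \<omega> * real_cond_exp M F (indicator (E \<inter> A)) \<omega> \<partial>M)"
    by (rule integral_mult_real_cond_exp_bounded[OF F _ _ indicator_integrable, symmetric])
       (use S in \<open>auto simp: indicator_def\<close>)
  also have "\<dots> = (\<integral>\<omega>. (indicator S \<omega> * ?\<pi> \<omega>) * real_cond_exp M F (indicator E) \<omega> \<partial>M)"
    by (rule integral_cong_AE) (use indep in \<open>auto simp: E_def elim!: eventually_mono\<close>)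
  also have "\<dots> = (\<integral>\<omega>. indicator S \<omega> * ?\<pi> \<omega> * indicator E \<omega> \<partial>M)"
    by (rule integral_mult_real_cond_exp_bounded[OF F])
       (use S S\<pi>_bounded in \<open>auto simp: indicator_integrable\<close>)
  also have "\<dots> = (\<integral>\<omega>. indicator S \<omega> * ?\<pi> \<omega> * indicator B (V \<omega>) \<partial>M)"
    by (intro Bochner_Integration.integral_cong) (auto simp: E_def indicator_def)
  finally show ?thesis .
qed

text \<open>Conditional independence of \<open>V\<close> and \<open>A\<close> is given on the events \<open>V \<in> B\<close> only; it extends
  to \<open>V\<close> itself because \<open>w = 1\<^sub>S (1\<^sub>A - E(1\<^sub>A | F))\<close> is then orthogonal to every \<open>1\<^sub>B(V)\<close>.\<close>

lemma real_cond_exp_indicator_mult_if_cond_indep: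
  fixes V :: "'a \<Rightarrow> real"
  assumes F: "sigma_finite_subalgebra M F" and "finite_measure M"
    and [measurable]: "V \<in> borel_measurable M" and V_int: "integrable M V"
    and A[measurable]: "A \<in> sets M"
    and indep: "\<And>B. B \<in> sets borel \<Longrightarrow> AE \<omega> in M.
       real_cond_exp M F (indicator ({\<omega>\<in>space M. V \<omega> \<in> B} \<inter> A)) \<omega>
       = real_cond_exp M F (indicator {\<omega>\<in>space M. V \<omega> \<in> B}) \<omega> * real_cond_exp M F (indicator A) \<omega>"
  shows "AE \<omega> in M. real_cond_exp M F (\<lambda>\<omega>. indicator A \<omega> * V \<omega>) \<omega>
            = real_cond_exp M F (indicator A) \<omega> * real_cond_exp M F V \<omega>"
proof -
  interpret sigma_finite_subalgebra M F by fact
  interpret finite_measure M by fact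
  define \<pi> where "\<pi> = real_cond_exp M F (indicator A)"
  have [measurable]: "\<pi> \<in> borel_measurable F" "\<pi> \<in> borel_measurable M"
    unfolding \<pi>_def by auto
  have \<pi>_bounded: "AE \<omega> in M. \<bar>\<pi> \<omega>\<bar> \<le> 1"
    unfolding \<pi>_def by (rule real_cond_exp_indicator_abs_le_1[OF F \<open>finite_measure M\<close> A])
  show ?thesis
    unfolding \<pi>_def[symmetric]
  proof (rule real_cond_exp_charact)
    fix S assume S: "S \<in> sets F"
    then have [measurable]: "S \<in> sets M"
      using subalg by (meson subalgebra_def subsetD)
    have S\<pi>_bounded: "AE \<omega> in M. \<bar>indicator S \<omega> * \<pi> \<omega>\<bar> \<le> 1"
      using \<pi>_bounded by eventually_elim (auto simp: indicator_def)
    define w where "w \<omega> = indicator S \<omega> * indicator A \<omega> - indicator S \<omega> * \<pi> \<omega>" for \<omega>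
    have [measurable]: "w \<in> borel_measurable M" unfolding w_def by measurable
    have w_bounded: "AE \<omega> in M. \<bar>w \<omega>\<bar> \<le> 2"
      using \<pi>_bounded by eventually_elim (auto simp: w_def indicator_def)
    have "(\<integral>\<omega>. w \<omega> * V \<omega> \<partial>M) = 0"
    proof (rule integral_mult_eq_0_if_indicator_integrals_eq_0)
      show "integrable M w" using w_bounded by (intro integrable_const_bound) auto
      show "integrable M (\<lambda>\<omega>. w \<omega> * V \<omega>)"
        using w_bounded V_int by (intro integrable_mult_bounded) auto
      fix B :: "real set" assume [measurable]: "B \<in> sets borel"
      have "integrable M (\<lambda>\<omega>. indicator S \<omega> * indicator A \<omega> * indicator B (V \<omega>) :: real)"
        by (intro integrable_const_bound[of _ 1]) (auto simp: indicator_def)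
      moreover have "integrable M (\<lambda>\<omega>. indicator S \<omega> * \<pi> \<omega> * indicator B (V \<omega>))"
        by (intro integrable_const_bound[of _ 1])
           (use S\<pi>_bounded in \<open>auto simp: indicator_def abs_mult elim!: eventually_mono\<close>)
      ultimately show "(\<integral>\<omega>. w \<omega> * indicator B (V \<omega>) \<partial>M) = 0"
        using integral_indicator_mult_if_cond_indep[OF F \<open>finite_measure M\<close> S A _ _ indep]
        by (simp add: w_def \<pi>_def left_diff_distrib)
    qed (use assms in auto)
    moreover have "integrable M (\<lambda>\<omega>. indicator S \<omega> * indicator A \<omega> * V \<omega>)"
      using V_int by (intro integrable_mult_bounded) (auto simp: indicator_def)
    moreover have "integrable M (\<lambda>\<omega>. indicator S \<omega> * \<pi> \<omega> * V \<omega>)"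
      using S\<pi>_bounded V_int by (intro integrable_mult_bounded) auto
    ultimately have "(\<integral>\<omega>. indicator S \<omega> * indicator A \<omega> * V \<omega> \<partial>M)
        = (\<integral>\<omega>. indicator S \<omega> * \<pi> \<omega> * V \<omega> \<partial>M)"
      by (simp add: w_def left_diff_distrib)
    also have "\<dots> = (\<integral>\<omega>. indicator S \<omega> * \<pi> \<omega> * real_cond_exp M F V \<omega> \<partial>M)"
      by (rule integral_mult_real_cond_exp_bounded[OF F, symmetric]) (use S S\<pi>_bounded V_int in auto)
    finally show "(\<integral>\<omega>\<in>S. indicator A \<omega> * V \<omega> \<partial>M) = (\<integral>\<omega>\<in>S. \<pi> \<omega> * real_cond_exp M F V \<omega> \<partial>M)"
      unfolding set_lebesgue_integral_def by (simp add: mult.assoc)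
  next
    show "integrable M (\<lambda>\<omega>. indicator A \<omega> * V \<omega>)"
      using integrable_mult_indicator[OF A V_int] by simp
    show "integrable M (\<lambda>\<omega>. \<pi> \<omega> * real_cond_exp M F V \<omega>)"
      using \<pi>_bounded V_int by (intro integrable_mult_bounded) auto
  qed auto
qed

text \<open>\<open>E(1\<^sub>A V | F)\<close> is computed twice: through the tower property over \<open>G\<close> it is
  \<open>g E(1\<^sub>A | F)\<close>, by conditional independence it is \<open>E(1\<^sub>A | F) E(V | F)\<close>; positivity of
  \<open>E(1\<^sub>A | F)\<close> allows cancelling it.\<close>

lemma real_cond_exp_identified_if_cond_indep:
  fixes Y V g :: "'a \<Rightarrow> real"
  assumes "finite_measure M" and F: "sigma_finite_subalgebra M F"
    and MG: "subalgebra M G" and GF: "subalgebra G F"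
    and A[measurable]: "A \<in> sets M" and AG: "(indicator A :: 'a \<Rightarrow> real) \<in> borel_measurable G"
    and [measurable]: "Y \<in> borel_measurable M" and V[measurable]: "V \<in> borel_measurable M"
    and "integrable M Y" and V_int: "integrable M V"
    and g[measurable]: "g \<in> borel_measurable F"
    and regression: "AE \<omega> in M. \<omega> \<in> A \<longrightarrow> real_cond_exp M G Y \<omega> = g \<omega>"
    and YV: "\<And>\<omega>. \<omega> \<in> A \<Longrightarrow> Y \<omega> = V \<omega>"
    and indep: "\<And>B. B \<in> sets borel \<Longrightarrow> AE \<omega> in M.
       real_cond_exp M F (indicator ({\<omega>\<in>space M. V \<omega> \<in> B} \<inter> A)) \<omega>
       = real_cond_exp M F (indicator {\<omega>\<in>space M. V \<omega> \<in> B}) \<omega> * real_cond_exp M F (indicator A) \<omega>"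
    and pos: "AE \<omega> in M. 0 < real_cond_exp M F (indicator A) \<omega>"
  shows "AE \<omega> in M. g \<omega> = real_cond_exp M F V \<omega>"
proof -
  interpret F: sigma_finite_subalgebra M F by fact
  interpret G: sigma_finite_subalgebra M G
    by (rule F.nested_subalg_is_sigma_finite[OF MG GF])
  have [measurable]: "g \<in> borel_measurable M"
    by (rule measurable_from_subalg[OF F.subalg g])
  have AV: "integrable M (\<lambda>\<omega>. indicator A \<omega> * V \<omega>)"
    using integrable_mult_indicator[OF A \<open>integrable M V\<close>] by simp
  have "AE \<omega> in M. real_cond_exp M G (\<lambda>\<omega>. indicator A \<omega> * V \<omega>) \<omega>
          = real_cond_exp M G (\<lambda>\<omega>. indicator A \<omega> * Y \<omega>) \<omega>"
    by (rule G.real_cond_exp_cong) (auto simp: YV indicator_def)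
  moreover have "AE \<omega> in M. real_cond_exp M G (\<lambda>\<omega>. indicator A \<omega> * Y \<omega>) \<omega>
          = indicator A \<omega> * real_cond_exp M G Y \<omega>"
    by (rule G.real_cond_exp_mult[OF AG])
       (use integrable_mult_indicator[OF A \<open>integrable M Y\<close>] in simp_all)
  ultimately have AV_G: "AE \<omega> in M. real_cond_exp M G (\<lambda>\<omega>. indicator A \<omega> * V \<omega>) \<omega>
          = g \<omega> * indicator A \<omega>"
    using regression by eventually_elim (auto simp: indicator_def)
  have gA: "integrable M (\<lambda>\<omega>. g \<omega> * indicator A \<omega>)"
    using integrable_cong_AE[OF _ _ AV_G] G.real_cond_exp_int(1)[OF AV] by simp
  have "AE \<omega> in M. real_cond_exp M F (\<lambda>\<omega>. indicator A \<omega> * V \<omega>) \<omega>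
          = real_cond_exp M F (real_cond_exp M G (\<lambda>\<omega>. indicator A \<omega> * V \<omega>)) \<omega>"
    using F.real_cond_exp_nested_subalg[OF MG GF AV] by (auto elim!: eventually_mono)
  moreover have "AE \<omega> in M. real_cond_exp M F (real_cond_exp M G (\<lambda>\<omega>. indicator A \<omega> * V \<omega>)) \<omega>
          = real_cond_exp M F (\<lambda>\<omega>. g \<omega> * indicator A \<omega>) \<omega>"
    by (rule F.real_cond_exp_cong[OF AV_G]) auto
  moreover have "AE \<omega> in M. real_cond_exp M F (\<lambda>\<omega>. g \<omega> * indicator A \<omega>) \<omega>
          = g \<omega> * real_cond_exp M F (indicator A) \<omega>"
    by (rule F.real_cond_exp_mult[OF g _ gA]) simp
  moreover have "AE \<omega> in M. real_cond_exp M F (\<lambda>\<omega>. indicator A \<omega> * V \<omega>) \<omega>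
          = real_cond_exp M F (indicator A) \<omega> * real_cond_exp M F V \<omega>"
    by (rule real_cond_exp_indicator_mult_if_cond_indep[OF F \<open>finite_measure M\<close> V V_int A indep])
  ultimately show ?thesis
    using pos by eventually_elim auto
qed

lemma integral_square_diff_real_cond_exp:
  fixes Y h k :: "'a \<Rightarrow> real"
  assumes "sigma_finite_subalgebra M G"
    and [measurable]: "Y \<in> borel_measurable M" "h \<in> borel_measurable G" "k \<in> borel_measurable G"
    and "integrable M (\<lambda>\<omega>. (Y \<omega>)\<^sup>2)" "integrable M (\<lambda>\<omega>. (h \<omega>)\<^sup>2)" "integrable M (\<lambda>\<omega>. (k \<omega>)\<^sup>2)"
    and h: "AE \<omega> in M. h \<omega> = real_cond_exp M G Y \<omega>"
  shows "(\<integral>\<omega>. (Y \<omega> - k \<omega>)\<^sup>2 \<partial>M) = (\<integral>\<omega>. (Y \<omega> - h \<omega>)\<^sup>2 \<partial>M) + (\<integral>\<omega>. (h \<omega> - k \<omega>)\<^sup>2 \<partial>M)"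
proof -
  interpret sigma_finite_subalgebra M G by fact
  define d where "d \<omega> = h \<omega> - k \<omega>" for \<omega>
  have dG: "d \<in> borel_measurable G" unfolding d_def by measurable
  have [measurable]: "h \<in> borel_measurable M" "k \<in> borel_measurable M" "d \<in> borel_measurable M"
    using assms(3,4) dG by (auto intro: measurable_from_subalg[OF subalg])
  have d2: "integrable M (\<lambda>\<omega>. (d \<omega>)\<^sup>2)"
    unfolding d_def by (rule integrable_square_diff) (use assms in auto)
  have dY: "integrable M (\<lambda>\<omega>. d \<omega> * Y \<omega>)" and dh: "integrable M (\<lambda>\<omega>. d \<omega> * h \<omega>)"
    using d2 assms by (auto intro!: integrable_mult_square_integrable)
  have Yh: "integrable M (\<lambda>\<omega>. (Y \<omega> - h \<omega>)\<^sup>2)"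
    by (rule integrable_square_diff) (use assms in auto)
  have orthogonal: "(\<integral>\<omega>. d \<omega> * Y \<omega> \<partial>M) = (\<integral>\<omega>. d \<omega> * h \<omega> \<partial>M)"
  proof -
    have "(\<integral>\<omega>. d \<omega> * Y \<omega> \<partial>M) = (\<integral>\<omega>. d \<omega> * real_cond_exp M G Y \<omega> \<partial>M)"
      by (rule real_cond_exp_intg(2)[OF dY dG, symmetric]) simp
    also have "\<dots> = (\<integral>\<omega>. d \<omega> * h \<omega> \<partial>M)"
      by (rule integral_cong_AE) (use h in \<open>auto elim!: eventually_mono\<close>)
    finally show ?thesis .
  qed
  have "(\<integral>\<omega>. (Y \<omega> - k \<omega>)\<^sup>2 \<partial>M)
      = (\<integral>\<omega>. (Y \<omega> - h \<omega>)\<^sup>2 + 2 * (d \<omega> * Y \<omega>) - 2 * (d \<omega> * h \<omega>) + (d \<omega>)\<^sup>2 \<partial>M)"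
    by (rule Bochner_Integration.integral_cong) (auto simp: d_def power2_eq_square algebra_simps)
  also have "\<dots> = (\<integral>\<omega>. (Y \<omega> - h \<omega>)\<^sup>2 \<partial>M) + 2 * (\<integral>\<omega>. d \<omega> * Y \<omega> \<partial>M)
      - 2 * (\<integral>\<omega>. d \<omega> * h \<omega> \<partial>M) + (\<integral>\<omega>. (d \<omega>)\<^sup>2 \<partial>M)"
    using Yh dY dh d2 by simp
  finally show ?thesis
    using orthogonal by (simp add: d_def)
qed

lemma integral_split_level_sets:
  fixes \<phi> :: "'b \<Rightarrow> 'a \<Rightarrow> real"
  assumes [measurable]: "X \<in> measurable M (count_space UNIV)"
    and X_range: "\<And>\<omega>. \<omega> \<in> space M \<Longrightarrow> X \<omega> \<in> S" and "finite S"
    and \<phi>: "\<And>x. x \<in> S \<Longrightarrow> integrable M (\<phi> x)"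
  shows "(\<integral>\<omega>. \<phi> (X \<omega>) \<omega> \<partial>M) = (\<Sum>x\<in>S. \<integral>\<omega>. indicator {\<omega>\<in>space M. X \<omega> = x} \<omega> * \<phi> x \<omega> \<partial>M)"
proof -
  have "(\<integral>\<omega>. \<phi> (X \<omega>) \<omega> \<partial>M) = (\<integral>\<omega>. (\<Sum>x\<in>S. indicator {\<omega>\<in>space M. X \<omega> = x} \<omega> * \<phi> x \<omega>) \<partial>M)"
  proof (rule Bochner_Integration.integral_cong[OF refl])
    fix \<omega> assume "\<omega> \<in> space M"
    then have "indicator {\<omega>\<in>space M. X \<omega> = x} \<omega> * \<phi> x \<omega> = (if X \<omega> = x then \<phi> (X \<omega>) \<omega> else 0)" for x
      by (auto simp: indicator_def)
    then show "\<phi> (X \<omega>) \<omega> = (\<Sum>x\<in>S. indicator {\<omega>\<in>space M. X \<omega> = x} \<omega> * \<phi> x \<omega>)"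
      using X_range[OF \<open>\<omega> \<in> space M\<close>] \<open>finite S\<close> by simp
  qed
  also have "\<dots> = (\<Sum>x\<in>S. \<integral>\<omega>. indicator {\<omega>\<in>space M. X \<omega> = x} \<omega> * \<phi> x \<omega> \<partial>M)"
    using integrable_mult_indicator[OF _ \<phi>] by (intro Bochner_Integration.integral_sum) simp
  finally show ?thesis .
qed

lemma measure_mult_integral_uniform_measure:
  fixes f :: "'a \<Rightarrow> real"
  assumes "finite_measure M" and [measurable]: "A \<in> sets M" "f \<in> borel_measurable M"
    and pos: "measure M A > 0"
  shows "measure M A * (\<integral>\<omega>. f \<omega> \<partial>uniform_measure M A) = (\<integral>\<omega>. indicator A \<omega> * f \<omega> \<partial>M)"
proof -
  interpret finite_measure M by fact
  have "uniform_measure M A = density M (\<lambda>\<omega>. ennreal (indicator A \<omega> / measure M A))"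
    unfolding uniform_measure_def
    by (intro density_cong)
       (auto simp: emeasure_eq_measure divide_ennreal[of 1 "measure M A", simplified] pos indicator_def)
  then have "(\<integral>\<omega>. f \<omega> \<partial>uniform_measure M A) = (\<integral>\<omega>. indicator A \<omega> * f \<omega> \<partial>M) / measure M A"
    by (simp add: integral_density)
  then show ?thesis using pos by simp
qed

lemma integral_pair_measure_level_sets:
  fixes \<phi> :: "'a \<Rightarrow> 'c \<Rightarrow> real" and X :: "'b \<Rightarrow> 'c"
  assumes "sigma_finite_measure M" "finite_measure M'"
    and [measurable]: "X \<in> measurable M' (count_space UNIV)"
    and X_range: "\<And>\<omega>. \<omega> \<in> space M' \<Longrightarrow> X \<omega> \<in> S" and "finite S"
    and [measurable]: "(\<lambda>(a, x). \<phi> a x) \<in> borel_measurable (M \<Otimes>\<^sub>M count_space UNIV)"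
    and nonneg: "\<And>a x. 0 \<le> \<phi> a x" and \<phi>: "\<And>x. x \<in> S \<Longrightarrow> integrable M (\<lambda>a. \<phi> a x)"
  shows "(\<integral>\<omega>. \<phi> (fst \<omega>) (X (snd \<omega>)) \<partial>(M \<Otimes>\<^sub>M M'))
       = (\<Sum>x\<in>S. measure M' {\<omega>\<in>space M'. X \<omega> = x} * (\<integral>a. \<phi> a x \<partial>M))"
proof -
  interpret M': finite_measure M' by fact
  interpret pair_sigma_finite M M'
    using assms(1) M'.sigma_finite_measure_axioms by (rule pair_sigma_finite.intro)
  define c where "c x = (\<integral>a. \<phi> a x \<partial>M)" for x
  have c_nonneg: "0 \<le> c x" for x
    unfolding c_def by (rule integral_nonneg_AE) (simp add: nonneg)
  have [measurable]: "(\<lambda>\<omega>. \<phi> (fst \<omega>) (X (snd \<omega>))) \<in> borel_measurable (M \<Otimes>\<^sub>M M')"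
    by measurable
  have c_int: "integrable M' (\<lambda>b. c (X b))"
  proof (rule Bochner_Integration.integrable_bound[of _ "\<lambda>_. \<Sum>x\<in>S. c x"])
    show "AE b in M'. norm (c (X b)) \<le> norm (\<Sum>x\<in>S. c x)"
      using X_range \<open>finite S\<close> c_nonneg
      by (intro AE_I2) (simp add: member_le_sum sum_nonneg)
    show "(\<lambda>b. c (X b)) \<in> borel_measurable M'"
      by (rule measurable_compose[OF assms(3)]) simp
  qed simp
  have "(\<integral>\<^sup>+\<omega>. \<phi> (fst \<omega>) (X (snd \<omega>)) \<partial>(M \<Otimes>\<^sub>M M')) = (\<integral>\<^sup>+b. \<integral>\<^sup>+a. \<phi> a (X b) \<partial>M \<partial>M')"
    by (subst nn_integral_snd[symmetric]) simp_all
  also have "\<dots> = (\<integral>\<^sup>+b. c (X b) \<partial>M')"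
    using X_range by (intro nn_integral_cong) (simp add: c_def nn_integral_eq_integral \<phi> nonneg)
  also have "\<dots> = (\<integral>b. c (X b) \<partial>M')"
    by (rule nn_integral_eq_integral[OF c_int]) (simp add: c_nonneg)
  also have "(\<integral>b. c (X b) \<partial>M') = (\<Sum>x\<in>S. measure M' {\<omega>\<in>space M'. X \<omega> = x} * c x)"
    using integral_split_level_sets[of X M' S "\<lambda>x _. c x"] X_range \<open>finite S\<close> by simp
  finally show ?thesis
    by (simp add: integral_eq_nn_integral nonneg c_def sum_nonneg c_nonneg[unfolded c_def])
qed

lemma cond_indep_component_level_set:
  fixes U :: "'i \<Rightarrow> 'a \<Rightarrow> real" and X :: "'a \<Rightarrow> 'x"
  assumes indep: "cond_indep M (\<lambda>\<omega>. restrict (\<lambda>i. U i \<omega>) I) (PiM I (\<lambda>_. borel))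
      X (count_space UNIV) W MW"
    and "i \<in> I" "B \<in> sets borel"
  shows "AE \<omega> in M.
      real_cond_exp M (gen_alg M W MW)
        (indicator ({\<omega>\<in>space M. U i \<omega> \<in> B} \<inter> {\<omega>\<in>space M. X \<omega> = x})) \<omega>
      = real_cond_exp M (gen_alg M W MW) (indicator {\<omega>\<in>space M. U i \<omega> \<in> B}) \<omega>
        * real_cond_exp M (gen_alg M W MW) (indicator {\<omega>\<in>space M. X \<omega> = x}) \<omega>"
proof -
  let ?C = "(\<lambda>f. f i) -` B \<inter> space (PiM I (\<lambda>_. borel :: real measure))"
  have C: "?C \<in> sets (PiM I (\<lambda>_. borel))"
    by (rule measurable_sets[OF measurable_component_singleton]) (use assms in auto)
  have "\<forall>C\<in>sets (PiM I (\<lambda>_. borel)). \<forall>D\<in>sets (count_space UNIV). AE \<omega> in M.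
      real_cond_exp M (gen_alg M W MW)
        (indicator ({\<omega>\<in>space M. restrict (\<lambda>i. U i \<omega>) I \<in> C} \<inter> {\<omega>\<in>space M. X \<omega> \<in> D})) \<omega>
      = real_cond_exp M (gen_alg M W MW) (indicator {\<omega>\<in>space M. restrict (\<lambda>i. U i \<omega>) I \<in> C}) \<omega>
        * real_cond_exp M (gen_alg M W MW) (indicator {\<omega>\<in>space M. X \<omega> \<in> D}) \<omega>"
    using indep unfolding cond_indep_def by blast
  from this[rule_format, OF C, of "{x}"] show ?thesis
    using \<open>i \<in> I\<close> by (simp add: space_PiM Int_def conj_commute cong: conj_cong)
qed

locale potential_outcome_model = prob_space M
  for M :: "'a measure" and N :: "'z measure" and K :: nat
    and X :: "'a \<Rightarrow> nat" and Z :: "'a \<Rightarrow> 'z" and Y :: "'a \<Rightarrow> real"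
    and Yp :: "nat \<Rightarrow> 'a \<Rightarrow> real" and f0 :: "nat \<Rightarrow> 'z \<Rightarrow> real" +
  assumes X_meas[measurable]: "X \<in> measurable M (count_space UNIV)"
    and X_range: "\<And>\<omega>. \<omega> \<in> space M \<Longrightarrow> X \<omega> \<in> {1..K}"
    and Z_meas[measurable]: "Z \<in> measurable M N"
    and Y_meas[measurable]: "Y \<in> borel_measurable M"
    and Y_sq: "integrable M (\<lambda>\<omega>. (Y \<omega>)\<^sup>2)"
    and Yp_meas: "\<And>x. x \<in> {1..K} \<Longrightarrow> Yp x \<in> borel_measurable M"
    and Yp_sq: "\<And>x. x \<in> {1..K} \<Longrightarrow> integrable M (\<lambda>\<omega>. (Yp x \<omega>)\<^sup>2)"
    and p_pos: "\<And>x. x \<in> {1..K} \<Longrightarrow> measure M {\<omega>\<in>space M. X \<omega> = x} > 0"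
    and consistency: "\<And>\<omega>. \<omega> \<in> space M \<Longrightarrow> Y \<omega> = Yp (X \<omega>) \<omega>"
    and ignorability: "cond_indep M (\<lambda>\<omega>. restrict (\<lambda>x. Yp x \<omega>) {1..K}) (PiM {1..K} (\<lambda>_. borel))
                          X (count_space UNIV) Z N"
    and propensity_pos: "\<And>x. x \<in> {1..K} \<Longrightarrow> AE \<omega> in M.
          0 < real_cond_exp M (gen_alg M Z N) (indicator {\<omega>\<in>space M. X \<omega> = x}) \<omega>"
    and f0_meas[measurable]: "(\<lambda>(x, z). f0 x z) \<in> borel_measurable (count_space UNIV \<Otimes>\<^sub>M N)"
    and f0_cef: "AE \<omega> in M. f0 (X \<omega>) (Z \<omega>)
          = real_cond_exp M (gen_alg M (\<lambda>\<omega>. (X \<omega>, Z \<omega>)) (count_space UNIV \<Otimes>\<^sub>M N)) Y \<omega>"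
begin

abbreviation "Z_alg \<equiv> gen_alg M Z N"
abbreviation "XZ_alg \<equiv> gen_alg M (\<lambda>\<omega>. (X \<omega>, Z \<omega>)) (count_space UNIV \<Otimes>\<^sub>M N)"
abbreviation "X_event x \<equiv> {\<omega>\<in>space M. X \<omega> = x}"

lemma XZ_meas[measurable]: "(\<lambda>\<omega>. (X \<omega>, Z \<omega>)) \<in> measurable M (count_space UNIV \<Otimes>\<^sub>M N)"
  by measurable

lemma f0_level_meas[measurable]: "f0 x \<in> borel_measurable N"
  using measurable_Pair2[OF f0_meas, of x] by simp

lemma sigma_finite_subalgebra_Z_alg: "sigma_finite_subalgebra M Z_alg"
  by (rule sigma_finite_subalgebra_gen_alg[OF finite_measure_axioms Z_meas])

lemma sigma_finite_subalgebra_XZ_alg: "sigma_finite_subalgebra M XZ_alg"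
  by (rule sigma_finite_subalgebra_gen_alg[OF finite_measure_axioms XZ_meas])

lemma subalgebra_XZ_alg_Z_alg: "subalgebra XZ_alg Z_alg"
  by (rule subalgebra_gen_alg_comp[OF XZ_meas measurable_snd]) simp

lemma f0_level_Z_alg_meas: "(\<lambda>\<omega>. f0 x (Z \<omega>)) \<in> borel_measurable Z_alg"
  by (rule measurable_gen_alg[OF Z_meas f0_level_meas])

lemma indicator_X_event_XZ_alg_meas: "(indicator (X_event x) :: 'a \<Rightarrow> real) \<in> borel_measurable XZ_alg"
proof -
  have "(\<lambda>\<omega>. indicator {x} (fst (X \<omega>, Z \<omega>)) :: real) \<in> borel_measurable XZ_alg"
    by (rule measurable_gen_alg[OF XZ_meas]) (rule measurable_compose[OF measurable_fst], simp)
  then show ?thesis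
    by (rule measurable_cong[THEN iffD1, rotated]) (auto simp: gen_alg_def indicator_def)
qed

lemma integrable_Y: "integrable M Y"
  by (rule square_integrable_imp_integrable[OF Y_meas Y_sq])

lemma integrable_Yp: "x \<in> {1..K} \<Longrightarrow> integrable M (Yp x)"
  by (rule square_integrable_imp_integrable[OF Yp_meas Yp_sq])

lemma f0_eq_real_cond_exp_potential_outcome:
  assumes x: "x \<in> {1..K}"
  shows "AE \<omega> in M. f0 x (Z \<omega>) = real_cond_exp M Z_alg (Yp x) \<omega>"
proof -
  have "X_event x \<in> sets M" by measurable
  have "\<And>\<omega>. \<omega> \<in> X_event x \<Longrightarrow> Y \<omega> = Yp x \<omega>"
    using consistency by auto
  moreover have "AE \<omega> in M. \<omega> \<in> X_event x \<longrightarrow> real_cond_exp M XZ_alg Y \<omega> = f0 x (Z \<omega>)"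
    using f0_cef by eventually_elim auto
  moreover have "AE \<omega> in M.
       real_cond_exp M Z_alg (indicator ({\<omega>\<in>space M. Yp x \<omega> \<in> B} \<inter> X_event x)) \<omega>
       = real_cond_exp M Z_alg (indicator {\<omega>\<in>space M. Yp x \<omega> \<in> B}) \<omega>
         * real_cond_exp M Z_alg (indicator (X_event x)) \<omega>" if "B \<in> sets borel" for B
    by (rule cond_indep_component_level_set[OF ignorability x that])
  ultimately show ?thesis
    by (intro real_cond_exp_identified_if_cond_indep[OF finite_measure_axioms
          sigma_finite_subalgebra_Z_alg subalgebra_gen_alg[OF XZ_meas] subalgebra_XZ_alg_Z_alg
          \<open>X_event x \<in> sets M\<close> indicator_X_event_XZ_alg_meas Y_meas Yp_meas[OF x]
          integrable_Y integrable_Yp[OF x] f0_level_Z_alg_meas] propensity_pos[OF x])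
qed

lemma square_integrable_f0_level:
  assumes x: "x \<in> {1..K}"
  shows "integrable M (\<lambda>\<omega>. (f0 x (Z \<omega>))\<^sup>2)"
proof -
  interpret sigma_finite_subalgebra M Z_alg by (rule sigma_finite_subalgebra_Z_alg)
  have "integrable M (\<lambda>\<omega>. (real_cond_exp M Z_alg (Yp x) \<omega>)\<^sup>2)"
    by (rule integrable_convex_cond_exp[where I=UNIV])
       (use integrable_Yp[OF x] Yp_sq[OF x] convex_power2 in auto)
  moreover have "AE \<omega> in M. (f0 x (Z \<omega>))\<^sup>2 = (real_cond_exp M Z_alg (Yp x) \<omega>)\<^sup>2"
    using f0_eq_real_cond_exp_potential_outcome[OF x] by eventually_elim simp
  ultimately show ?thesis
    by (subst integrable_cong_AE) (auto intro: borel_measurable_cond_exp2)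
qed

lemma square_integrable_f0:
  "integrable M (\<lambda>\<omega>. (f0 (X \<omega>) (Z \<omega>))\<^sup>2)"
proof (rule Bochner_Integration.integrable_bound[of _ "\<lambda>\<omega>. \<Sum>x\<in>{1..K}. (f0 x (Z \<omega>))\<^sup>2"])
  show "integrable M (\<lambda>\<omega>. \<Sum>x\<in>{1..K}. (f0 x (Z \<omega>))\<^sup>2)"
    using square_integrable_f0_level by (intro Bochner_Integration.integrable_sum) auto
  show "AE \<omega> in M. norm ((f0 (X \<omega>) (Z \<omega>))\<^sup>2) \<le> norm (\<Sum>x\<in>{1..K}. (f0 x (Z \<omega>))\<^sup>2)"
    using X_range
    by (intro AE_I2) (simp add: member_le_sum[where f = "\<lambda>x. (f0 x (Z _))\<^sup>2"] sum_nonneg)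
qed measurable

lemma integral_switch_error:
  "(\<integral>\<omega>. (Y (fst \<omega>) - f0 (X (snd \<omega>)) (Z (fst \<omega>)))\<^sup>2 \<partial>(M \<Otimes>\<^sub>M M))
    = (\<Sum>x\<in>{1..K}. measure M (X_event x) * (\<integral>\<omega>. (Y \<omega> - f0 x (Z \<omega>))\<^sup>2 \<partial>M))"
proof (rule integral_pair_measure_level_sets[where \<phi> = "\<lambda>a x. (Y a - f0 x (Z a))\<^sup>2"])
  show "(\<lambda>(a, x). (Y a - f0 x (Z a))\<^sup>2) \<in> borel_measurable (M \<Otimes>\<^sub>M count_space UNIV)"
    by measurable
  show "integrable M (\<lambda>a. (Y a - f0 x (Z a))\<^sup>2)" if "x \<in> {1..K}" for x
    by (rule integrable_square_diff) (use Y_sq square_integrable_f0_level[OF that] in auto)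
qed (use X_range in \<open>auto intro: sigma_finite_measure finite_measure_axioms\<close>)

lemma f0_XZ_alg_meas: "(\<lambda>\<omega>. f0 (X \<omega>) (Z \<omega>)) \<in> borel_measurable XZ_alg"
  using measurable_gen_alg[OF XZ_meas f0_meas] by simp

lemma integral_square_error_level:
  assumes x': "x' \<in> {1..K}"
  shows "(\<integral>\<omega>. (Y \<omega> - f0 x' (Z \<omega>))\<^sup>2 \<partial>M)
    = (\<integral>\<omega>. (Y \<omega> - f0 (X \<omega>) (Z \<omega>))\<^sup>2 \<partial>M) + (\<integral>\<omega>. (f0 (X \<omega>) (Z \<omega>) - f0 x' (Z \<omega>))\<^sup>2 \<partial>M)"
  by (rule integral_square_diff_real_cond_exp[OF sigma_finite_subalgebra_XZ_alg Y_meas f0_XZ_alg_meas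
        measurable_from_subalg[OF subalgebra_XZ_alg_Z_alg f0_level_Z_alg_meas]
        Y_sq square_integrable_f0 square_integrable_f0_level[OF x'] f0_cef])

lemma integral_square_regression_gap:
  assumes x': "x' \<in> {1..K}"
  shows "(\<integral>\<omega>. (f0 (X \<omega>) (Z \<omega>) - f0 x' (Z \<omega>))\<^sup>2 \<partial>M)
    = (\<Sum>x\<in>{1..K}. measure M (X_event x) *
        (\<integral>\<omega>. (real_cond_exp M Z_alg (Yp x) \<omega> - real_cond_exp M Z_alg (Yp x') \<omega>)\<^sup>2
          \<partial>uniform_measure M (X_event x)))"
proof -
  have "(\<integral>\<omega>. (f0 (X \<omega>) (Z \<omega>) - f0 x' (Z \<omega>))\<^sup>2 \<partial>M)
      = (\<Sum>x\<in>{1..K}. \<integral>\<omega>. indicator (X_event x) \<omega> * (f0 x (Z \<omega>) - f0 x' (Z \<omega>))\<^sup>2 \<partial>M)"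
  proof (rule integral_split_level_sets[OF X_meas X_range,
        where \<phi> = "\<lambda>x \<omega>. (f0 x (Z \<omega>) - f0 x' (Z \<omega>))\<^sup>2"])
    show "integrable M (\<lambda>\<omega>. (f0 x (Z \<omega>) - f0 x' (Z \<omega>))\<^sup>2)" if "x \<in> {1..K}" for x
    proof (rule integrable_square_diff[OF _ _ square_integrable_f0_level[OF that]
            square_integrable_f0_level[OF x']])
      show "(\<lambda>\<omega>. f0 x (Z \<omega>)) \<in> borel_measurable M" by measurable
      show "(\<lambda>\<omega>. f0 x' (Z \<omega>)) \<in> borel_measurable M" by measurable
    qed
  qed simp_all
  also have "\<dots> = (\<Sum>x\<in>{1..K}. measure M (X_event x) *
        (\<integral>\<omega>. (real_cond_exp M Z_alg (Yp x) \<omega> - real_cond_exp M Z_alg (Yp x') \<omega>)\<^sup>2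
          \<partial>uniform_measure M (X_event x)))"
  proof (rule sum.cong[OF refl])
    fix x assume x: "x \<in> {1..K}"
    have "AE \<omega> in M. indicator (X_event x) \<omega> * (f0 x (Z \<omega>) - f0 x' (Z \<omega>))\<^sup>2
        = indicator (X_event x) \<omega>
            * (real_cond_exp M Z_alg (Yp x) \<omega> - real_cond_exp M Z_alg (Yp x') \<omega>)\<^sup>2"
      using f0_eq_real_cond_exp_potential_outcome[OF x] f0_eq_real_cond_exp_potential_outcome[OF x']
      by eventually_elim simp
    then have "(\<integral>\<omega>. indicator (X_event x) \<omega> * (f0 x (Z \<omega>) - f0 x' (Z \<omega>))\<^sup>2 \<partial>M)
        = (\<integral>\<omega>. indicator (X_event x) \<omega>
            * (real_cond_exp M Z_alg (Yp x) \<omega> - real_cond_exp M Z_alg (Yp x') \<omega>)\<^sup>2 \<partial>M)"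
      by (rule integral_cong_AE[rotated 2]) (measurable, measurable)
    also have "\<dots> = measure M (X_event x) *
        (\<integral>\<omega>. (real_cond_exp M Z_alg (Yp x) \<omega> - real_cond_exp M Z_alg (Yp x') \<omega>)\<^sup>2
          \<partial>uniform_measure M (X_event x))"
      by (rule measure_mult_integral_uniform_measure[OF finite_measure_axioms _ _ p_pos[OF x],
            symmetric]) (measurable, measurable)
    finally show "(\<integral>\<omega>. indicator (X_event x) \<omega> * (f0 x (Z \<omega>) - f0 x' (Z \<omega>))\<^sup>2 \<partial>M) = \<dots>" .
  qed
  finally show ?thesis .
qed

lemma sum_measure_X_event: "(\<Sum>x\<in>{1..K}. measure M (X_event x)) = 1"
  using integral_split_level_sets[of X M "{1..K}" "\<lambda>_ _. 1::real"] X_range prob_space by simp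

end

theorem theorem1:
  fixes M :: "'a measure" and N :: "'z measure" and K :: nat
    and X :: "'a \<Rightarrow> nat" and Z :: "'a \<Rightarrow> 'z" and Y :: "'a \<Rightarrow> real"
    and Yp :: "nat \<Rightarrow> 'a \<Rightarrow> real" and f0 :: "nat \<Rightarrow> 'z \<Rightarrow> real"
  assumes prob: "prob_space M"
    and X_meas: "X \<in> measurable M (count_space UNIV)"
    and X_range: "\<forall>\<omega>\<in>space M. X \<omega> \<in> {1..K}"
    and Z_meas: "Z \<in> measurable M N"
    and Y_meas: "Y \<in> borel_measurable M"
    and Y_sq: "integrable M (\<lambda>\<omega>. (Y \<omega>)^2)"
    and Yp_meas: "\<forall>x\<in>{1..K}. Yp x \<in> borel_measurable M"
    and Yp_sq: "\<forall>x\<in>{1..K}. integrable M (\<lambda>\<omega>. (Yp x \<omega>)^2)"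
    and p_pos: "\<forall>x\<in>{1..K}. measure M {\<omega>\<in>space M. X \<omega> = x} > 0"
    and consistency: "\<forall>\<omega>\<in>space M. Y \<omega> = Yp (X \<omega>) \<omega>"
    and ignorability: "cond_indep M (\<lambda>\<omega>. restrict (\<lambda>x. Yp x \<omega>) {1..K}) (PiM {1..K} (\<lambda>_. borel))
                          X (count_space UNIV) Z N"
    and positivity: "\<forall>x\<in>{1..K}. AE \<omega> in M.
          0 < real_cond_exp M (gen_alg M Z N) (indicator {\<omega>\<in>space M. X \<omega> = x}) \<omega> \<and>
          real_cond_exp M (gen_alg M Z N) (indicator {\<omega>\<in>space M. X \<omega> = x}) \<omega> < 1"
    and f0_meas: "(\<lambda>(x, z). f0 x z) \<in> borel_measurable (count_space UNIV \<Otimes>\<^sub>M N)"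
    and f0_cef: "AE \<omega> in M. f0 (X \<omega>) (Z \<omega>)
          = real_cond_exp M (gen_alg M (\<lambda>\<omega>. (X \<omega>, Z \<omega>)) (count_space UNIV \<Otimes>\<^sub>M N)) Y \<omega>"
  shows "(\<integral>\<omega>. (Y (fst \<omega>) - f0 (X (snd \<omega>)) (Z (fst \<omega>)))^2 \<partial>(M \<Otimes>\<^sub>M M))
         - (\<integral>\<omega>. (Y \<omega> - f0 (X \<omega>) (Z \<omega>))^2 \<partial>M)
       = (\<Sum>x\<in>{1..K}. \<Sum>x'\<in>{1..K} - {x}.
            measure M {\<omega>\<in>space M. X \<omega> = x} * measure M {\<omega>\<in>space M. X \<omega> = x'} *
            (\<integral>\<omega>. (real_cond_exp M (gen_alg M Z N) (Yp x) \<omega>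
                    - real_cond_exp M (gen_alg M Z N) (Yp x') \<omega>)^2
               \<partial>(uniform_measure M {\<omega>\<in>space M. X \<omega> = x})))"
proof -
  have propensity_pos: "AE \<omega> in M.
      0 < real_cond_exp M (gen_alg M Z N) (indicator {\<omega>\<in>space M. X \<omega> = x}) \<omega>"
    if "x \<in> {1..K}" for x
    using bspec[OF positivity that] by eventually_elim simp
  interpret potential_outcome_model M N K X Z Y Yp f0
    by (intro potential_outcome_model.intro prob potential_outcome_model_axioms.intro)
       (use assms propensity_pos in simp_all)
  let ?p = "\<lambda>x. measure M (X_event x)"
  let ?I = "\<lambda>x x'. \<integral>\<omega>. (real_cond_exp M Z_alg (Yp x) \<omega> - real_cond_exp M Z_alg (Yp x') \<omega>)\<^sup>2
              \<partial>uniform_measure M (X_event x)"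
  let ?e = "\<integral>\<omega>. (Y \<omega> - f0 (X \<omega>) (Z \<omega>))\<^sup>2 \<partial>M"
  let ?D = "\<lambda>x'. \<integral>\<omega>. (f0 (X \<omega>) (Z \<omega>) - f0 x' (Z \<omega>))\<^sup>2 \<partial>M"
  have "(\<Sum>x'\<in>{1..K}. ?p x' * (\<integral>\<omega>. (Y \<omega> - f0 x' (Z \<omega>))\<^sup>2 \<partial>M))
      = (\<Sum>x'\<in>{1..K}. ?p x' * ?e + ?p x' * ?D x')"
    by (intro sum.cong refl) (simp add: integral_square_error_level distrib_left)
  then have "(\<Sum>x'\<in>{1..K}. ?p x' * (\<integral>\<omega>. (Y \<omega> - f0 x' (Z \<omega>))\<^sup>2 \<partial>M)) - ?e
      = (\<Sum>x'\<in>{1..K}. ?p x' * ?D x')"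
    using sum_measure_X_event by (simp add: sum.distrib flip: sum_distrib_right)
  also have "\<dots> = (\<Sum>x'\<in>{1..K}. \<Sum>x\<in>{1..K}. ?p x * ?p x' * ?I x x')"
    by (intro sum.cong refl) (simp add: integral_square_regression_gap sum_distrib_left mult_ac)
  also have "\<dots> = (\<Sum>x\<in>{1..K}. \<Sum>x'\<in>{1..K}. ?p x * ?p x' * ?I x x')"
    by (rule sum.swap)
  also have "\<dots> = (\<Sum>x\<in>{1..K}. \<Sum>x'\<in>{1..K} - {x}. ?p x * ?p x' * ?I x x')"
    by (rule sum.cong[OF refl]) (simp add: sum.remove)
  finally show ?thesis
    unfolding integral_switch_error .
qed

end
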